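(* In $X=(\mathbb{R}^2,\|\cdot\|_\infty)$ let $A=\{(x,y):x>0,\ y\ge1/x\}$, $B=B_1\cup B_2$ with $B_1=\{(x,y):x>-1,\ y\le\frac{1}{x+1}-1\}$ and $B_2=\{(x,y):x\le-1,\ y\in\mathbb{R}\}$, and let $\overline{A}=\{(x,y):x>0,\ y=1/x\}$ and $\overline{B}=\{(x,y):x>-1,\ y=\frac{1}{x+1}-1\}$. Define $T:A\cup B\to\mathbb{R}^2$ by $$Tz=\left(-\tfrac{d(z,\overline{A})}{2},-\tfrac{d(z,\overline{A})}{2}\right)\ \text{for }z\in A,\qquad Tz=\left(1+\tfrac{d(z,\overline{B})}{2},1+\tfrac{d(z,\overline{B})}{2}\right)\ \text{for }z\in B.$$ Then $\mathrm{dist}(A,B)=1$, $T(A)\subseteq B$, $T(B)\subseteq A$, and $$\|Ta-Tb\|_\infty\le\tfrac12\|a-b\|_\infty+\tfrac12\,\mathrm{dist}(A,B)\quad\text{for all }a\in A,\ b\in B.$$ Consequently $T$ has a unique best proximity point in $A$, even though the ordered pair $(A,B)$ does not have the $UC$ property.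
   Context: $\|(x,y)\|_\infty=\max\{|x|,|y|\}$; $d(z,S)=\inf\{\|z-s\|_\infty:s\in S\}$; $\mathrm{dist}(A,B)=\inf\{\|a-b\|_\infty:a\in A,b\in B\}$. A point $x\in A$ is a best proximity point of $T$ in $A$ if $\|x-Tx\|_\infty=\mathrm{dist}(A,B)$. The ordered pair $(A,B)$ has the $UC$ property if for all sequences $\{x_n\},\{z_n\}\subset A$, $\{y_n\}\subset B$ with $\lim_n\|x_n-y_n\|_\infty=\lim_n\|z_n-y_n\|_\infty=\mathrm{dist}(A,B)$ one has $\lim_n\|x_n-z_n\|_\infty=0$. *)

theory Defs
  imports "HOL-Analysis.Analysis"
begin

text \<open>Points of R^2 are pairs; the norm is the max (sup) norm, defined explicitly
  (the library norm on real \<times> real is the Euclidean one).\<close>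

definition normInf :: "real \<times> real \<Rightarrow> real" where
  "normInf z = max \<bar>fst z\<bar> \<bar>snd z\<bar>"

definition dpt :: "real \<times> real \<Rightarrow> (real \<times> real) set \<Rightarrow> real" where
  "dpt z S = (INF s\<in>S. normInf (z - s))"

definition distSet :: "(real \<times> real) set \<Rightarrow> (real \<times> real) set \<Rightarrow> real" where
  "distSet A B = (INF p\<in>A \<times> B. normInf (fst p - snd p))"

definition best_proximity_point ::
  "(real \<times> real) set \<Rightarrow> (real \<times> real) set \<Rightarrow> (real \<times> real \<Rightarrow> real \<times> real) \<Rightarrow> real \<times> real \<Rightarrow> bool" where
  "best_proximity_point A B T x \<longleftrightarrow> x \<in> A \<and> normInf (x - T x) = distSet A B"

definition UC_property :: "(real \<times> real) set \<Rightarrow> (real \<times> real) set \<Rightarrow> bool" where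
  "UC_property A B \<longleftrightarrow>
     (\<forall>xs zs ys. (\<forall>n. xs n \<in> A) \<longrightarrow> (\<forall>n. zs n \<in> A) \<longrightarrow> (\<forall>n. ys n \<in> B) \<longrightarrow>
        (\<lambda>n. normInf (xs n - ys n)) \<longlonglongrightarrow> distSet A B \<longrightarrow>
        (\<lambda>n. normInf (zs n - ys n)) \<longlonglongrightarrow> distSet A B \<longrightarrow>
        (\<lambda>n. normInf (xs n - zs n)) \<longlonglongrightarrow> 0)"

definition exA :: "(real \<times> real) set" where
  "exA = {(x, y). x > 0 \<and> y \<ge> 1 / x}"

definition exB1 :: "(real \<times> real) set" where
  "exB1 = {(x, y). x > -1 \<and> y \<le> 1 / (x + 1) - 1}"

definition exB2 :: "(real \<times> real) set" where
  "exB2 = {(x, y). x \<le> -1}"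

definition exB :: "(real \<times> real) set" where
  "exB = exB1 \<union> exB2"

definition exAbar :: "(real \<times> real) set" where
  "exAbar = {(x, y). x > 0 \<and> y = 1 / x}"

definition exBbar :: "(real \<times> real) set" where
  "exBbar = {(x, y). x > -1 \<and> y = 1 / (x + 1) - 1}"

text \<open>T on A \<union> B (A and B are disjoint); values outside A \<union> B are irrelevant.\<close>
definition exT :: "real \<times> real \<Rightarrow> real \<times> real" where
  "exT z = (if z \<in> exA then (- dpt z exAbar / 2, - dpt z exAbar / 2)
            else (1 + dpt z exBbar / 2, 1 + dpt z exBbar / 2))"

end

theory Submission
  imports Defs "HOL-Real_Asymp.Real_Asymp"
begin

text \<open>Every point of the plane lies on exactly one diagonal translate
  \<open>{(p + s, 1/p + s) | p > 0}\<close> of the hyperbola branch \<open>y = 1/x\<close>. The points of \<open>A\<close> are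
  those with shift \<open>s \<ge> 0\<close>, and the points of \<open>B + (1,1)\<close> have shift \<open>-t \<le> 0\<close>. So \<open>a\<close> is
  within \<open>s\<close> of the boundary curve of \<open>A\<close>, \<open>b\<close> within \<open>t\<close> of that of \<open>B\<close>, and since the
  hyperbola is decreasing one coordinate of \<open>a - b\<close> is at least \<open>1 + s + t\<close>. This gives
  \<open>dist(A, B) = 1\<close> and \<open>\<parallel>Ta - Tb\<parallel> = 1 + (d(a, \<^bold>A) + d(b, \<^bold>B))/2 \<le> (\<parallel>a - b\<parallel> + 1)/2\<close>,
  where \<open>\<^bold>A\<close>, \<open>\<^bold>B\<close> are the boundary curves. UC fails because far out along the asymptote
  \<open>y = 0\<close> two points of \<open>A\<close> at distance 2 are both almost nearest to one point of \<open>B\<close>.\<close>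

lemma normInf_pair [simp]: "normInf (x, y) = max \<bar>x\<bar> \<bar>y\<bar>"
  by (simp add: normInf_def)

lemma normInf_nonneg: "normInf z \<ge> 0"
  by (simp add: normInf_def)

lemma dpt_nonneg: "S \<noteq> {} \<Longrightarrow> dpt z S \<ge> 0"
  unfolding dpt_def by (rule cINF_greatest) (auto simp: normInf_nonneg)

lemma dpt_le: "s \<in> S \<Longrightarrow> dpt z S \<le> normInf (z - s)"
  unfolding dpt_def by (rule cINF_lower) (auto intro!: bdd_belowI[where m=0] simp: normInf_nonneg)

lemma exists_pos_diff_inverse: "\<exists>p>0. p - 1/p = (w::real)"
proof -
  define D where "D = sqrt (w\<^sup>2 + 4)"
  have "sqrt (w\<^sup>2) < D"
    unfolding D_def by (rule real_sqrt_less_mono) simp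
  then have "\<bar>w\<bar> < D" by simp
  then have pos: "(w + D) / 2 > 0" by (simp add: abs_less_iff)
  have "D\<^sup>2 = w\<^sup>2 + 4" by (simp add: D_def)
  then have "((w + D) / 2)\<^sup>2 - 1 = w * ((w + D) / 2)"
    by (simp add: power2_eq_square algebra_simps)
  with pos have "(w + D) / 2 - 1 / ((w + D) / 2) = w"
    by (simp add: field_simps power2_eq_square)
  with pos show ?thesis by blast
qed

lemma diagonal_hyperbola_coordinates:
  fixes u v :: real
  obtains p s where "p > 0" "u = p + s" "v = 1/p + s"
proof -
  obtain p where "p > 0" "p - 1/p = u - v"
    using exists_pos_diff_inverse by blast
  then show thesis
    by (intro that[of p "u - p"]) auto
qed

lemma diagonal_hyperbola_product:
  fixes p s :: real
  assumes "p > 0"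
  shows "(p + s) * (1/p + s) = 1 + s * (p + s + 1/p)"
  using assms by (simp add: field_simps)

lemma exA_coordinates:
  assumes "a \<in> exA"
  obtains p s where "p > 0" "s \<ge> 0" "a = (p + s, 1/p + s)"
proof -
  obtain u v where a: "a = (u, v)" by fastforce
  obtain p s where p: "p > 0" and u: "u = p + s" and v: "v = 1/p + s"
    using diagonal_hyperbola_coordinates by metis
  from assms have "u > 0" "u * v \<ge> 1"
    by (auto simp: a exA_def field_simps)
  moreover have "p + s + 1/p > 0"
    using \<open>u > 0\<close> p u by (simp add: add_pos_pos)
  ultimately have "s \<ge> 0"
    using diagonal_hyperbola_product[OF p, of s] u v
    by (simp add: zero_le_mult_iff)
  with p show thesis
    using that a u v by blast
qed

lemma exB_coordinates:
  assumes "b \<in> exB"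
  obtains q t where "q > 0" "t \<ge> 0" "b = (q - 1 - t, 1/q - 1 - t)"
proof -
  have "b = (fst b + 1 - 1, snd b + 1 - 1)" by simp
  then obtain u v where b: "b = (u - 1, v - 1)" by blast
  obtain q s where q: "q > 0" and u: "u = q + s" and v: "v = 1/q + s"
    using diagonal_hyperbola_coordinates by metis
  have "s \<le> 0"
  proof (rule ccontr)
    assume "\<not> s \<le> 0"
    then have "u > 0" "u * v > 1"
      using q u v diagonal_hyperbola_product[OF q, of s] by (simp_all add: add_pos_pos)
    then show False
      using assms by (auto simp: b exB_def exB1_def exB2_def field_simps)
  qed
  then show thesis
    using that[of q "- s"] q b u v by simp
qed

text \<open>Compare the first coordinates if \<open>p \<ge> q\<close>, the second ones otherwise.\<close>
lemma normInf_diagonal_hyperbolas_ge: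
  fixes p q s t :: real
  assumes "p > 0" "s \<ge> 0" "q > 0" "t \<ge> 0"
  shows "1 + s + t \<le> normInf ((p + s, 1/p + s) - (q - 1 - t, 1/q - 1 - t))"
proof (cases "p \<ge> q")
  case False
  then have "1/p > 1/q"
    using assms by (simp add: frac_less2)
  then show ?thesis using assms by simp
qed (use assms in simp)

lemma exAbar_nonempty: "exAbar \<noteq> {}"
proof -
  have "(1, 1) \<in> exAbar" by (simp add: exAbar_def)
  then show ?thesis by blast
qed

lemma exBbar_nonempty: "exBbar \<noteq> {}"
proof -
  have "(0, 0) \<in> exBbar" by (simp add: exBbar_def)
  then show ?thesis by blast
qed

lemma normInf_diff_ge_dpt:
  assumes "a \<in> exA" "b \<in> exB"
  shows "dpt a exAbar + dpt b exBbar + 1 \<le> normInf (a - b)"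
proof -
  obtain p s where p: "p > 0" "s \<ge> 0" and a: "a = (p + s, 1/p + s)"
    using exA_coordinates[OF assms(1)] .
  obtain q t where q: "q > 0" "t \<ge> 0" and b: "b = (q - 1 - t, 1/q - 1 - t)"
    using exB_coordinates[OF assms(2)] .
  have "dpt a exAbar \<le> normInf (a - (p, 1/p))"
    using p by (intro dpt_le) (simp add: exAbar_def)
  also have "\<dots> = s" using p by (simp add: a)
  finally have "dpt a exAbar \<le> s" .
  moreover have "dpt b exBbar \<le> normInf (b - (q - 1, 1/q - 1))"
    using q by (intro dpt_le) (simp add: exBbar_def)
  then have "dpt b exBbar \<le> t" using q by (simp add: b)
  moreover have "1 + s + t \<le> normInf (a - b)"
    unfolding a b using p q by (rule normInf_diagonal_hyperbolas_ge)
  ultimately show ?thesis by linarith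
qed

lemma exA_exB_disjoint: "exA \<inter> exB = {}"
proof -
  have False if "(x, y) \<in> exA" "(x, y) \<in> exB" for x y :: real
  proof -
    from that(1) have "x > 0" "y \<ge> 1/x" by (auto simp: exA_def)
    moreover have "1/x > 0" "1/(x + 1) < 1"
      using \<open>x > 0\<close> by (simp_all add: field_simps)
    moreover from that(2) \<open>x > 0\<close> have "y \<le> 1/(x + 1) - 1"
      by (auto simp: exB_def exB1_def exB2_def)
    ultimately show False by linarith
  qed
  then show ?thesis by auto
qed

lemma distSet_exA_exB: "distSet exA exB = 1"
proof (rule antisym)
  have witness: "((1, 1), (0, 0)) \<in> exA \<times> exB"
    by (simp add: exA_def exB_def exB1_def)
  show "distSet exA exB \<le> 1"
    unfolding distSet_def
    by (rule cINF_lower2[OF _ witness]) (auto intro!: bdd_belowI[where m=0] simp: normInf_nonneg)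
  show "1 \<le> distSet exA exB"
    unfolding distSet_def
  proof (rule cINF_greatest)
    fix z assume "z \<in> exA \<times> exB"
    then show "1 \<le> normInf (fst z - snd z)"
      using normInf_diff_ge_dpt[of "fst z" "snd z"]
        dpt_nonneg[OF exAbar_nonempty, of "fst z"] dpt_nonneg[OF exBbar_nonempty, of "snd z"]
      by auto
  qed (use witness in blast)
qed

lemma exT_exA: "a \<in> exA \<Longrightarrow> exT a = (- dpt a exAbar / 2, - dpt a exAbar / 2)"
  by (simp add: exT_def)

lemma exT_exB: "b \<in> exB \<Longrightarrow> exT b = (1 + dpt b exBbar / 2, 1 + dpt b exBbar / 2)"
  using exA_exB_disjoint by (auto simp: exT_def)

lemma exT_exA_in_exB: "a \<in> exA \<Longrightarrow> exT a \<in> exB"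
proof -
  assume a: "a \<in> exA"
  define d where "d = dpt a exAbar / 2"
  have "d \<ge> 0"
    unfolding d_def using dpt_nonneg[OF exAbar_nonempty] by simp
  have "d \<ge> 1 \<or> (- d > -1 \<and> - d \<le> 1/(1 - d) - 1)"
  proof (cases "d \<ge> 1")
    case False
    then have "1 \<le> 1/(1 - d)"
      using \<open>d \<ge> 0\<close> by (simp add: field_simps)
    with False \<open>d \<ge> 0\<close> show ?thesis by linarith
  qed simp
  then show ?thesis
    using a by (auto simp: exT_exA d_def exB_def exB1_def exB2_def)
qed

lemma exT_exB_in_exA: "b \<in> exB \<Longrightarrow> exT b \<in> exA"
proof -
  assume b: "b \<in> exB"
  define e where "e = dpt b exBbar / 2"
  have "e \<ge> 0"
    unfolding e_def using dpt_nonneg[OF exBbar_nonempty] by simp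
  then have "1/(1 + e) \<le> 1 + e"
    by (simp add: field_simps)
  with \<open>e \<ge> 0\<close> b show ?thesis
    by (simp add: exT_exB e_def exA_def)
qed

lemma exT_proximal_contraction:
  assumes a: "a \<in> exA" and b: "b \<in> exB"
  shows "normInf (exT a - exT b) \<le> 1/2 * normInf (a - b) + 1/2 * distSet exA exB"
proof -
  have "normInf (exT a - exT b) = 1 + dpt a exAbar / 2 + dpt b exBbar / 2"
    using a b dpt_nonneg[OF exAbar_nonempty, of a] dpt_nonneg[OF exBbar_nonempty, of b]
    by (simp add: exT_exA exT_exB)
  then show ?thesis
    using normInf_diff_ge_dpt[OF a b] by (simp add: distSet_exA_exB)
qed

lemma exA_below_one_one:
  assumes "(x, y) \<in> exA" "x \<le> 1" "y \<le> 1"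
  shows "x = 1 \<and> y = 1"
proof -
  from assms(1) have "x > 0" "1/x \<le> y" by (simp_all add: exA_def)
  then have "y > 0" "1 \<le> x * y"
    by (auto simp: divide_le_eq mult.commute intro: less_le_trans[of 0 "1/x"])
  moreover have "x * y \<le> x" "x * y \<le> y"
    using \<open>x > 0\<close> \<open>y > 0\<close> assms(2,3) by (simp_all add: mult_right_le_one_le mult_left_le_one_le)
  ultimately show ?thesis using assms(2,3) by linarith
qed

lemma best_proximity_point_exT_iff: "best_proximity_point exA exB exT z \<longleftrightarrow> z = (1, 1)"
proof
  assume bpp: "best_proximity_point exA exB exT z"
  obtain x y where z: "z = (x, y)" by fastforce
  define d where "d = dpt z exAbar / 2"
  have "d \<ge> 0"
    unfolding d_def using dpt_nonneg[OF exAbar_nonempty] by simp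
  from bpp have zA: "z \<in> exA" and "normInf (z - exT z) = 1"
    by (auto simp: best_proximity_point_def distSet_exA_exB)
  then have "max \<bar>x + d\<bar> \<bar>y + d\<bar> = 1"
    by (simp add: z exT_exA d_def)
  with \<open>d \<ge> 0\<close> have "x \<le> 1" "y \<le> 1"
    by auto
  with zA show "z = (1, 1)"
    using exA_below_one_one z by simp
next
  assume z: "z = (1, 1)"
  have "z \<in> exA" "z \<in> exAbar" by (simp_all add: z exA_def exAbar_def)
  then have "dpt z exAbar = 0"
    using dpt_le[of z exAbar z] dpt_nonneg[OF exAbar_nonempty, of z] by (simp add: normInf_def)
  with \<open>z \<in> exA\<close> show "best_proximity_point exA exB exT z"
    by (simp add: best_proximity_point_def distSet_exA_exB exT_exA z)
qed

lemma not_UC_property_exA_exB: "\<not> UC_property exA exB"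
proof
  assume uc: "UC_property exA exB"
  define xs where "xs = (\<lambda>n::nat. (real n + 3, 1 / (real n + 3)))"
  define zs where "zs = (\<lambda>n::nat. (real n + 1, 1 / (real n + 1)))"
  define ys where "ys = (\<lambda>n::nat. (real n + 2, -1 :: real))"
  have "\<forall>n. xs n \<in> exA" "\<forall>n. zs n \<in> exA" "\<forall>n. ys n \<in> exB"
    by (simp_all add: xs_def zs_def ys_def exA_def exB_def exB1_def)
  moreover have "(\<lambda>n. normInf (xs n - ys n)) = (\<lambda>n. 1 / (real n + 3) + 1)"
    "(\<lambda>n. normInf (zs n - ys n)) = (\<lambda>n. 1 / (real n + 1) + 1)"
    by (simp_all add: xs_def zs_def ys_def)
  moreover have "(\<lambda>n. 1 / (real n + 3) + 1) \<longlonglongrightarrow> 1" "(\<lambda>n. 1 / (real n + 1) + 1) \<longlonglongrightarrow> 1"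
    by real_asymp+
  ultimately have "(\<lambda>n. normInf (xs n - zs n)) \<longlonglongrightarrow> 0"
    using uc[unfolded UC_property_def distSet_exA_exB, rule_format, of xs zs ys] by simp
  moreover have "normInf (xs n - zs n) = 2" for n
  proof -
    have "1 / (real n + 3) \<le> 1" "1 / (real n + 1) \<le> 1"
      by (simp_all add: field_simps)
    moreover have "1 / (real n + 3) \<ge> 0" "1 / (real n + 1) \<ge> 0"
      by simp_all
    ultimately have "\<bar>1 / (real n + 3) - 1 / (real n + 1)\<bar> \<le> 2"
      unfolding abs_le_iff by linarith
    then show ?thesis by (simp add: xs_def zs_def)
  qed
  ultimately show False
    by (simp add: LIMSEQ_const_iff)
qed

theorem mainTheorem17:
  shows "distSet exA exB = 1
    \<and> exT ` exA \<subseteq> exB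
    \<and> exT ` exB \<subseteq> exA
    \<and> (\<forall>a\<in>exA. \<forall>b\<in>exB.
          normInf (exT a - exT b) \<le> 1/2 * normInf (a - b) + 1/2 * distSet exA exB)
    \<and> (\<exists>!x. best_proximity_point exA exB exT x)
    \<and> \<not> UC_property exA exB"
  using distSet_exA_exB exT_exA_in_exB exT_exB_in_exA exT_proximal_contraction
    not_UC_property_exA_exB
  by (auto simp: best_proximity_point_exT_iff)

end
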